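(* Let $h$ be the two-dimensional Euclid's hat. Define the minimal specific energy $$e(h)=\inf_{n\ge2}\ \inf_{(\zeta_1,\dots,\zeta_n)}\frac{1}{n}U_n(\zeta_1,\dots,\zeta_n;h)$$ and the constrained (modified) minimal specific energy $$\bar e(h)=\inf_{n\ge2}\ \inf_{\substack{(\zeta_1,\dots,\zeta_n)\\ \sigma_1+\dots+\sigma_n\neq0}}\frac{1}{n-1}U_n(\zeta_1,\dots,\zeta_n;h),$$ the inner infima running over all $\zeta_j=(\sigma_j,x_j)\in\{-1,1\}\times\mathbb{R}^2$. Then $e(h)=\bar e(h)=-1/2$. The value $-1/2$ is attained for $e$ by any configuration with $n$ even, $\sum_j\sigma_j=0$ and all $x_j$ equal, and for $\bar e$ by any configuration with $n$ odd, $|\sum_j\sigma_j|=1$ and all $x_j$ equal.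
   Context: The Euclid's hat is $h:[0,\infty)\to[0,1]$, $h(w)=\frac{2}{\pi}(\arccos w-w\sqrt{1-w^2})$ for $0\le w\le1$ and $h(w)=0$ for $w>1$. For $\zeta_j=(\sigma_j,x_j)\in\{-1,1\}\times\mathbb{R}^2$, $U_n(\zeta_1,\dots,\zeta_n;h)=\sum_{1\le i<j\le n}\sigma_i\sigma_j h(|x_i-x_j|)$. *)

theory Defs
  imports "HOL-Analysis.Analysis"
begin

text \<open>Two-dimensional Euclid's hat (arguments are distances, hence nonnegative).\<close>
definition euclid_hat :: "real \<Rightarrow> real" where
  "euclid_hat w = (if w \<le> 1 then 2 / pi * (arccos w - w * sqrt (1 - w\<^sup>2)) else 0)"

text \<open>A configuration of n charged points: charges sigma j and positions x j, for j < n.\<close>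
definition spins_ok :: "nat \<Rightarrow> (nat \<Rightarrow> int) \<Rightarrow> bool" where
  "spins_ok n \<sigma> \<longleftrightarrow> (\<forall>j<n. \<sigma> j \<in> {-1, 1})"

definition U_energy :: "(real \<Rightarrow> real) \<Rightarrow> nat \<Rightarrow> (nat \<Rightarrow> int) \<Rightarrow> (nat \<Rightarrow> real^2) \<Rightarrow> real" where
  "U_energy h n \<sigma> x =
     (\<Sum>(i, j) \<in> {(i, j). i < j \<and> j < n}. real_of_int (\<sigma> i * \<sigma> j) * h (dist (x i) (x j)))"

definition min_spec_energy :: "(real \<Rightarrow> real) \<Rightarrow> real" where
  "min_spec_energy h = Inf {U_energy h n \<sigma> x / real n | n \<sigma> x. n \<ge> 2 \<and> spins_ok n \<sigma>}"

definition mod_min_spec_energy :: "(real \<Rightarrow> real) \<Rightarrow> real" where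
  "mod_min_spec_energy h = Inf {U_energy h n \<sigma> x / (real n - 1) | n \<sigma> x.
       n \<ge> 2 \<and> spins_ok n \<sigma> \<and> (\<Sum>j<n. \<sigma> j) \<noteq> 0}"

end

theory Submission
  imports Defs
begin

text \<open>Up to the factor \<open>4/\<pi>\<close>, Euclid's hat \<open>h(|x - y|)\<close> is the area of the intersection of the
  discs of radius \<open>1/2\<close> about \<open>x\<close> and \<open>y\<close>. Hence, for \<open>f = \<Sum>\<^sub>j \<sigma>\<^sub>j 1\<^bsub>B(x\<^sub>j, 1/2)\<^esub>\<close>,
  \<open>\<integral> f = (\<pi>/4) \<Sum>\<^sub>j \<sigma>\<^sub>j\<close> and \<open>\<integral> f\<^sup>2 = (\<pi>/4) (n + 2 U\<^sub>n)\<close>. Since \<open>f\<close> is integer valued,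
  \<open>|f| \<le> f\<^sup>2\<close>, so \<open>n + 2 U\<^sub>n \<ge> |\<Sum>\<^sub>j \<sigma>\<^sub>j|\<close>: this gives \<open>U\<^sub>n/n \<ge> -1/2\<close>, and
  \<open>U\<^sub>n/(n - 1) \<ge> -1/2\<close> when the total charge is nonzero. For coincident points
  \<open>n + 2 U\<^sub>n = (\<Sum>\<^sub>j \<sigma>\<^sub>j)\<^sup>2\<close>, so total charge \<open>0\<close>, resp. \<open>\<plusminus>1\<close>, attains the bounds.\<close>

lemma measure_ball_Int_ball_dist_invariant:
  fixes x y x' y' :: "real^'n::{finite,wellorder}"
  assumes "dist x y = dist x' y'"
  shows "measure lebesgue (ball x r \<inter> ball y r) = measure lebesgue (ball x' r \<inter> ball y' r)"
proof -
  have translate: "measure lebesgue (ball a r \<inter> ball b r) = measure lebesgue (ball 0 r \<inter> ball (b - a) r)"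
    for a b :: "real^'n::{finite,wellorder}"
  proof -
    have "ball a r \<inter> ball b r = (+) a ` (ball 0 r \<inter> ball (b - a) r)"
      by (simp add: image_Int)
    then show ?thesis by (simp add: measure_translation)
  qed
  have "norm (y - x) = norm (y' - x')"
    using assms by (simp add: dist_norm norm_minus_commute)
  then obtain f where f: "orthogonal_transformation f" "f (y - x) = y' - x'"
    by (rule orthogonal_transformation_exists)
  then have "f ` (ball 0 r \<inter> ball (y - x) r) = ball 0 r \<inter> ball (y' - x') r"
    by (simp add: image_Int orthogonal_transformation_inj image_orthogonal_transformation_ball
        orthogonal_transformation_linear linear_0)
  then show ?thesis
    using measure_orthogonal_image[OF f(1)] by (metis translate fmeasurable.Int lmeasurable_ball)
qed

text \<open>The isometry \<open>vec2\<close> carries Lebesgue measure on \<open>real \<times> real\<close> to that on \<open>real^2\<close>,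
  so planar areas can be computed by Fubini on the product.\<close>

definition vec2 :: "real \<times> real \<Rightarrow> real^2" where
  "vec2 p = vector [fst p, snd p]"

lemma vec2_nth [simp]: "vec2 p $ 1 = fst p" "vec2 p $ 2 = snd p"
  by (simp_all add: vec2_def)

lemma dist_vec2 [simp]: "dist (vec2 p) (vec2 q) = dist p q"
  by (simp add: dist_vec_def L2_set_def sum_2 dist_prod_def)

lemma vimage_vec2_ball: "vec2 -` ball (vec2 p) r = ball p r"
  by auto

lemma borel_measurable_vec2 [measurable]: "vec2 \<in> borel_measurable borel"
proof -
  have vec2_eq: "vec2 = (\<lambda>p. \<chi> i. if i = 1 then fst p else snd p)"
    by (auto simp: vec_eq_iff forall_2)
  have "continuous_on UNIV (\<lambda>p::real \<times> real. if i = 1 then fst p else snd p)" for i :: 2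
    by (cases "i = 1") (auto intro: continuous_intros)
  then show ?thesis
    unfolding vec2_eq by (intro borel_measurable_continuous_onI continuous_on_vec_lambda)
qed

lemma lborel_real2_eq_distr_vec2: "(lborel :: (real^2) measure) = distr lborel borel vec2"
proof (rule lborel_eqI)
  fix l u :: "real^2"
  assume "\<And>b. b \<in> Basis \<Longrightarrow> l \<bullet> b \<le> u \<bullet> b"
  from this[of "axis 1 1"] this[of "axis 2 1"] have le: "l$1 \<le> u$1" "l$2 \<le> u$2"
    by (auto simp: inner_axis)
  have "vec2 -` box l u = box (l$1) (u$1) \<times> box (l$2) (u$2)"
    by (auto simp: mem_box Basis_vec_def UNIV_2 inner_axis)
  then have "emeasure (distr lborel borel vec2) (box l u)
             = emeasure (lborel \<Otimes>\<^sub>M lborel) (box (l$1) (u$1) \<times> box (l$2) (u$2))"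
    by (subst emeasure_distr) (auto simp: lborel_prod)
  also have "\<dots> = (u$1 - l$1) * (u$2 - l$2)"
    using le by (simp add: lborel.emeasure_pair_measure_Times ennreal_mult)
  also have "\<dots> = (\<Prod>b\<in>Basis. (u - l) \<bullet> b)"
    by (simp add: Basis_vec_def UNIV_2 inner_axis axis_eq_axis mult.commute)
  finally show "emeasure (distr lborel borel vec2) (box l u) = (\<Prod>b\<in>Basis. (u - l) \<bullet> b)" .
qed simp

lemma emeasure_lborel_vimage_vec2:
  "A \<in> sets borel \<Longrightarrow> emeasure lborel A = emeasure lborel (vec2 -` A)"
  by (simp add: lborel_real2_eq_distr_vec2 emeasure_distr)

definition lens_half_width :: "real \<Rightarrow> real" where
  "lens_half_width d = sqrt (1 - d\<^sup>2) / 2"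

lemma circle_primitive_has_real_derivative:
  fixes a :: real
  assumes "\<bar>2 * a\<bar> < 1"
  shows "((\<lambda>t. (2 * t * sqrt (1 - 4 * t\<^sup>2) + arcsin (2 * t)) / 4)
          has_real_derivative sqrt (1 - 4 * a\<^sup>2)) (at a)"
proof -
  have pos: "0 < 1 - 4 * a\<^sup>2"
    using assms abs_square_less_1[of "2 * a"] by (simp add: power_mult_distrib)
  have "((\<lambda>t. (2 * t * sqrt (1 - 4 * t\<^sup>2) + arcsin (2 * t)) / 4) has_real_derivative
         (2 * sqrt (1 - 4 * a\<^sup>2) + 2 * a * (inverse (sqrt (1 - 4 * a\<^sup>2)) / 2 * (- (4 * (2 * a))))
          + inverse (sqrt (1 - (2 * a)\<^sup>2)) * 2) / 4) (at a)"
    using assms pos by (auto intro!: derivative_eq_intros simp: power_mult_distrib)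
  then show ?thesis
  proof (rule DERIV_cong)
    have "sqrt (1 - 4 * a\<^sup>2) > 0" "(sqrt (1 - 4 * a\<^sup>2))\<^sup>2 = 1 - 4 * a\<^sup>2"
      using pos by simp_all
    then show "(2 * sqrt (1 - 4 * a\<^sup>2) + 2 * a * (inverse (sqrt (1 - 4 * a\<^sup>2)) / 2 * (- (4 * (2 * a))))
          + inverse (sqrt (1 - (2 * a)\<^sup>2)) * 2) / 4 = sqrt (1 - 4 * a\<^sup>2)"
      by (simp add: power_mult_distrib field_simps power2_eq_square)
  qed
qed

text \<open>\<open>sqrt (1 - 4 * a\<^sup>2) - d\<close> is the length of the cross-section at abscissa \<open>a\<close> of the
  lens between the discs of radius \<open>1/2\<close> about \<open>(0, 0)\<close> and \<open>(0, d)\<close>.\<close>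

lemma has_integral_lens_chord:
  fixes d :: real
  assumes "0 \<le> d" "d \<le> 1"
  shows "((\<lambda>a. sqrt (1 - 4 * a\<^sup>2) - d) has_integral (arccos d - d * sqrt (1 - d\<^sup>2)) / 2)
           {-lens_half_width d..lens_half_width d}"
proof -
  define w where "w = lens_half_width d"
  define F where "F = (\<lambda>t::real. (2 * t * sqrt (1 - 4 * t\<^sup>2) + arcsin (2 * t)) / 4)"
  have w0: "0 \<le> w" and w2: "4 * w\<^sup>2 = 1 - d\<^sup>2"
    using assms by (simp_all add: w_def lens_half_width_def power_divide abs_square_le_1)
  have w1: "2 * w \<le> 1"
    using assms by (simp add: w_def lens_half_width_def real_sqrt_le_1_iff)
  have "continuous_on {-w..w} (\<lambda>t. arcsin (2 * t))"
    by (rule continuous_on_compose2[OF continuous_on_arcsin']) (use w1 in \<open>auto intro!: continuous_intros\<close>)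
  then have "continuous_on {-w..w} F"
    unfolding F_def using w1 by (intro continuous_intros) auto
  moreover have "(F has_vector_derivative sqrt (1 - 4 * t\<^sup>2)) (at t)" if "t \<in> {-w<..<w}" for t
    using that w1 circle_primitive_has_real_derivative[of t]
    by (simp add: F_def abs_less_iff has_real_derivative_iff_has_vector_derivative[symmetric])
  ultimately have "((\<lambda>t. sqrt (1 - 4 * t\<^sup>2)) has_integral (F w - F (-w))) {-w..w}"
    using w0 by (intro fundamental_theorem_of_calculus_interior) auto
  from has_integral_diff[OF this has_integral_const_real[of d "-w" w]]
  have "((\<lambda>t. sqrt (1 - 4 * t\<^sup>2) - d) has_integral (F w - F (-w) - 2 * w * d)) {-w..w}"
    using w0 by (simp add: algebra_simps)
  moreover have "F w - F (-w) - 2 * w * d = (arccos d - d * sqrt (1 - d\<^sup>2)) / 2"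
  proof -
    have "F (-w) = - F w"
      using w0 w1 by (simp add: F_def arcsin_minus field_simps)
    moreover have "F w = (2 * w * d + arccos d) / 4"
      using assms w2 by (simp add: F_def w_def lens_half_width_def arccos_arcsin_sqrt_pos)
    moreover have "2 * w = sqrt (1 - d\<^sup>2)"
      by (simp add: w_def lens_half_width_def)
    ultimately show ?thesis
      by (simp add: field_simps)
  qed
  ultimately show ?thesis
    unfolding w_def by simp
qed

lemma le_lens_chord_iff:
  fixes a d :: real
  assumes "0 \<le> d" "d \<le> 1"
  shows "d \<le> sqrt (1 - 4 * a\<^sup>2) \<longleftrightarrow> a \<in> {-lens_half_width d..lens_half_width d}"
proof -
  define w where "w = lens_half_width d"
  have "0 \<le> w"
    using assms by (simp add: w_def lens_half_width_def abs_square_le_1)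
  have "d \<le> sqrt (1 - 4 * a\<^sup>2) \<longleftrightarrow> d\<^sup>2 \<le> 1 - 4 * a\<^sup>2"
    using assms real_sqrt_le_iff[of "d\<^sup>2" "1 - 4 * a\<^sup>2"] by simp
  also have "\<dots> \<longleftrightarrow> a\<^sup>2 \<le> w\<^sup>2"
    using assms by (simp add: w_def lens_half_width_def power_divide abs_square_le_1) arith
  also have "\<dots> \<longleftrightarrow> a \<in> {-w..w}"
    using \<open>0 \<le> w\<close> abs_le_square_iff[of a w] by (auto simp: abs_le_iff)
  finally show ?thesis
    unfolding w_def .
qed

lemma mem_ball_half_Pair_iff:
  fixes a b c :: real
  shows "(a, b) \<in> ball (0, c) (1/2) \<longleftrightarrow> a\<^sup>2 + (b - c)\<^sup>2 < 1/4"
proof -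
  have "dist (0, c) (a, b) = sqrt (a\<^sup>2 + (b - c)\<^sup>2)"
    by (simp add: dist_Pair_Pair dist_real_def power2_commute)
  moreover have "sqrt (1/4) = (1/2 :: real)"
    by (simp add: real_sqrt_divide)
  ultimately show ?thesis
    by (metis mem_ball real_sqrt_less_iff)
qed

lemma emeasure_lens_slice:
  fixes a d :: real
  assumes "0 \<le> d"
  shows "emeasure lborel (Pair a -` (ball (0, 0) (1/2) \<inter> ball (0, d) (1/2)))
         = ennreal (max 0 (sqrt (1 - 4 * a\<^sup>2) - d))"
proof (cases "a\<^sup>2 < 1/4")
  case True
  define s where "s = sqrt (1/4 - a\<^sup>2)"
  have "0 < s" "s\<^sup>2 = 1/4 - a\<^sup>2"
    using True by (simp_all add: s_def)
  have "sqrt (1 - 4 * a\<^sup>2) = sqrt (2\<^sup>2 * (1/4 - a\<^sup>2))"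
    by (simp add: algebra_simps)
  then have chord: "sqrt (1 - 4 * a\<^sup>2) = 2 * s"
    unfolding s_def real_sqrt_mult by simp
  have "(a, b) \<in> ball (0, c) (1/2) \<longleftrightarrow> c - s < b \<and> b < c + s" for b c
    using \<open>0 < s\<close> \<open>s\<^sup>2 = 1/4 - a\<^sup>2\<close> abs_le_square_iff[of s "b - c"]
    by (auto simp: mem_ball_half_Pair_iff abs_less_iff not_le[symmetric] simp del: mem_ball)
  then have "Pair a -` (ball (0, 0) (1/2) \<inter> ball (0, d) (1/2)) = {d - s<..<s}"
    using assms by (auto simp del: mem_ball)
  then show ?thesis
    using chord by (cases "d - s \<le> s") (simp_all add: max_def)
next
  case False
  then have "sqrt (1 - 4 * a\<^sup>2) \<le> 0"
    by simp
  then have "max 0 (sqrt (1 - 4 * a\<^sup>2) - d) = 0"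
    using assms by linarith
  moreover have "Pair a -` (ball (0, 0) (1/2) \<inter> ball (0, d) (1/2)) = {}"
    using False by (auto simp: mem_ball_half_Pair_iff simp del: mem_ball) (smt (verit) zero_le_power2)
  ultimately show ?thesis
    by simp
qed

lemma emeasure_lens_Pair:
  fixes d :: real
  assumes "0 \<le> d" "d \<le> 1"
  shows "emeasure lborel (ball (0, 0) (1/2) \<inter> ball (0, d) (1/2) :: (real \<times> real) set)
         = ennreal ((arccos d - d * sqrt (1 - d\<^sup>2)) / 2)"
proof -
  let ?L = "ball (0, 0) (1/2) \<inter> ball (0, d) (1/2) :: (real \<times> real) set"
  let ?I = "{-lens_half_width d..lens_half_width d}"
  have "?L \<in> sets (lborel \<Otimes>\<^sub>M lborel)"
    unfolding lborel_prod by simp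
  then have "emeasure lborel ?L = (\<integral>\<^sup>+a. emeasure lborel (Pair a -` ?L) \<partial>lborel)"
    by (simp add: lborel.emeasure_pair_measure_alt flip: lborel_prod)
  also have "\<dots> = (\<integral>\<^sup>+a. ennreal (sqrt (1 - 4 * a\<^sup>2) - d) * indicator ?I a \<partial>lborel)"
  proof (rule nn_integral_cong)
    fix a :: real
    show "emeasure lborel (Pair a -` ?L) = ennreal (sqrt (1 - 4 * a\<^sup>2) - d) * indicator ?I a"
      using emeasure_lens_slice[OF assms(1), of a] le_lens_chord_iff[OF assms, of a]
      by (auto simp: max_def split: split_indicator)
  qed
  also have "\<dots> = ennreal ((arccos d - d * sqrt (1 - d\<^sup>2)) / 2)"
    using le_lens_chord_iff[OF assms]
    by (intro nn_integral_has_integral_lebesgue' has_integral_lens_chord assms) auto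
  finally show ?thesis .
qed

lemma measure_ball_half_Int_ball_half:
  fixes x y :: "real^2"
  shows "measure lebesgue (ball x (1/2) \<inter> ball y (1/2)) = pi / 4 * euclid_hat (dist x y)"
proof (cases "dist x y \<le> 1")
  case True
  define d where "d = dist x y"
  have d: "0 \<le> d" "d \<le> 1"
    using True by (simp_all add: d_def)
  have "measure lebesgue (ball x (1/2) \<inter> ball y (1/2))
        = measure lebesgue (ball (vec2 (0, 0)) (1/2) \<inter> ball (vec2 (0, d)) (1/2))"
    using d by (intro measure_ball_Int_ball_dist_invariant) (simp add: d_def dist_Pair_Pair)
  also have "\<dots> = enn2real (emeasure lborel
                      (ball (0, 0) (1/2) \<inter> ball (0, d) (1/2) :: (real \<times> real) set))"
    by (simp add: measure_def emeasure_lborel_vimage_vec2 vimage_vec2_ball vimage_Int)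
  also have "\<dots> = (arccos d - d * sqrt (1 - d\<^sup>2)) / 2"
  proof -
    have "0 \<le> (arccos d - d * sqrt (1 - d\<^sup>2)) / 2"
      using le_lens_chord_iff[OF d]
      by (intro has_integral_nonneg[OF has_integral_lens_chord[OF d]]) auto
    then show ?thesis
      by (simp add: emeasure_lens_Pair[OF d])
  qed
  also have "\<dots> = pi / 4 * euclid_hat d"
    using d by (simp add: euclid_hat_def)
  finally show ?thesis
    unfolding d_def .
next
  case False
  then have "ball x (1/2) \<inter> ball y (1/2) = {}"
    by (intro disjoint_ballI) simp
  then show ?thesis
    using False by (simp add: euclid_hat_def)
qed

lemma euclid_hat_0 [simp]: "euclid_hat 0 = 1"
  by (simp add: euclid_hat_def)

lemma abs_le_square_of_Ints:
  fixes x :: "'a::linordered_idom"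
  assumes "x \<in> \<int>"
  shows "\<bar>x\<bar> \<le> x\<^sup>2"
proof -
  obtain k where k: "x = of_int k"
    using assms Ints_cases by blast
  have "\<bar>k\<bar> \<le> k\<^sup>2"
  proof (cases "k = 0")
    case False
    then have "\<bar>k\<bar> * 1 \<le> \<bar>k\<bar> * \<bar>k\<bar>"
      by (intro mult_left_mono) auto
    then show ?thesis
      by (simp add: power2_eq_square)
  qed simp
  then show ?thesis
    unfolding k by (metis of_int_abs of_int_le_iff of_int_power)
qed

lemma abs_sum_le_euclid_hat_form:
  fixes \<sigma> :: "nat \<Rightarrow> int" and x :: "nat \<Rightarrow> real^2"
  shows "\<bar>real_of_int (\<Sum>j<n. \<sigma> j)\<bar>
         \<le> (\<Sum>i<n. \<Sum>j<n. real_of_int (\<sigma> i * \<sigma> j) * euclid_hat (dist (x i) (x j)))"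
proof -
  define B where "B i = ball (x i) (1/2)" for i
  define f where "f t = (\<Sum>i<n. real_of_int (\<sigma> i) * indicator (B i) t)" for t :: "real^2"
  have overlap_integrable: "integrable lborel (\<lambda>t. indicator (B i) t * indicator (B j) t :: real)"
    and overlap_integral: "(\<integral>t. indicator (B i) t * indicator (B j) t \<partial>lborel)
                            = pi / 4 * euclid_hat (dist (x i) (x j))" for i j
  proof -
    have ind: "(\<lambda>t. indicator (B i) t * indicator (B j) t :: real) = indicator (B i \<inter> B j)"
      by (simp add: fun_eq_iff indicator_inter_arith)
    have "emeasure lborel (B i \<inter> B j) < \<infinity>"
      by (intro emeasure_bounded_finite) (simp add: B_def bounded_Int)
    then show "integrable lborel (\<lambda>t. indicator (B i) t * indicator (B j) t :: real)"
      unfolding ind by (intro integrable_real_indicator) (simp_all add: B_def)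
    have "measure lborel (B i \<inter> B j) = measure lebesgue (B i \<inter> B j)"
      by (simp add: B_def)
    then show "(\<integral>t. indicator (B i) t * indicator (B j) t \<partial>lborel)
               = pi / 4 * euclid_hat (dist (x i) (x j))"
      unfolding ind by (simp add: B_def measure_ball_half_Int_ball_half)
  qed
  have f_eq: "f t = (\<Sum>i<n. real_of_int (\<sigma> i) * (indicator (B i) t * indicator (B i) t))" for t
    unfolding f_def by (intro sum.cong refl) (simp add: indicator_def)
  have f_square: "f t * f t
      = (\<Sum>i<n. \<Sum>j<n. real_of_int (\<sigma> i * \<sigma> j) * (indicator (B i) t * indicator (B j) t))" for t
    unfolding f_def sum_product by (intro sum.cong refl) (simp add: algebra_simps)
  have "integrable lborel f"
    unfolding f_eq by (auto intro!: overlap_integrable)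
  moreover have "integrable lborel (\<lambda>t. f t * f t)"
    unfolding f_square
    by (intro Bochner_Integration.integrable_sum integrable_mult_right overlap_integrable)
  moreover have "f t \<in> \<int>" for t
    unfolding f_def by (intro Ints_sum Ints_mult) (auto simp: indicator_def)
  then have "\<bar>f t\<bar> \<le> f t * f t" for t
    using abs_le_square_of_Ints[of "f t"] by (simp add: power2_eq_square)
  ultimately have "\<bar>integral\<^sup>L lborel f\<bar> \<le> (\<integral>t. f t * f t \<partial>lborel)"
    by (intro integral_abs_bound_integral) auto
  moreover have "integral\<^sup>L lborel f = pi / 4 * real_of_int (\<Sum>j<n. \<sigma> j)"
    unfolding f_eq by (simp add: overlap_integrable overlap_integral sum_distrib_left mult.commute)
  moreover have "(\<integral>t. f t * f t \<partial>lborel)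
                 = pi / 4 * (\<Sum>i<n. \<Sum>j<n. real_of_int (\<sigma> i * \<sigma> j) * euclid_hat (dist (x i) (x j)))"
    unfolding f_square
    by (simp add: overlap_integrable overlap_integral sum_distrib_left algebra_simps)
  ultimately show ?thesis
    by (simp add: abs_mult)
qed

lemma double_sum_symmetric:
  fixes a :: "nat \<Rightarrow> nat \<Rightarrow> 'a::comm_semiring_1"
  assumes "\<And>i j. a i j = a j i"
  shows "(\<Sum>i<n. \<Sum>j<n. a i j) = (\<Sum>i<n. a i i) + 2 * (\<Sum>(i, j) \<in> {(i, j). i < j \<and> j < n}. a i j)"
proof (induction n)
  case (Suc n)
  have pairs: "{(i, j). i < j \<and> j < Suc n} = {(i, j). i < j \<and> j < n} \<union> (\<lambda>i. (i, n)) ` {..<n}"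
    by auto
  have "finite {(i, j). i < j \<and> j < n}"
    by (rule finite_subset[of _ "{..<n} \<times> {..<n}"]) auto
  then have "(\<Sum>(i, j) \<in> {(i, j). i < j \<and> j < Suc n}. a i j)
             = (\<Sum>(i, j) \<in> {(i, j). i < j \<and> j < n}. a i j) + (\<Sum>i<n. a i n)"
    unfolding pairs by (subst sum.union_disjoint) (auto simp: sum.reindex inj_on_def)
  moreover have "(\<Sum>j<n. a n j) = (\<Sum>i<n. a i n)"
    using assms by simp
  then have "(\<Sum>i<Suc n. \<Sum>j<Suc n. a i j)
                 = (\<Sum>i<n. \<Sum>j<n. a i j) + 2 * (\<Sum>i<n. a i n) + a n n"
    by (simp add: sum.distrib mult_2 add_ac)
  ultimately show ?case
    using Suc.IH by (simp add: distrib_left add_ac)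
qed simp

lemma U_energy_double_sum:
  assumes "spins_ok n \<sigma>" "h 0 = 1"
  shows "real n + 2 * U_energy h n \<sigma> x
         = (\<Sum>i<n. \<Sum>j<n. real_of_int (\<sigma> i * \<sigma> j) * h (dist (x i) (x j)))"
proof -
  have "real_of_int (\<sigma> i * \<sigma> i) * h (dist (x i) (x i)) = 1" if "i < n" for i
    using assms that by (auto simp: spins_ok_def)
  then have "(\<Sum>i<n. real_of_int (\<sigma> i * \<sigma> i) * h (dist (x i) (x i))) = real n"
    by simp
  moreover have "(\<Sum>i<n. \<Sum>j<n. real_of_int (\<sigma> i * \<sigma> j) * h (dist (x i) (x j)))
        = (\<Sum>i<n. real_of_int (\<sigma> i * \<sigma> i) * h (dist (x i) (x i))) + 2 * U_energy h n \<sigma> x"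
    unfolding U_energy_def by (rule double_sum_symmetric) (simp add: dist_commute mult.commute)
  ultimately show ?thesis
    by simp
qed

lemma U_energy_coincident:
  assumes "spins_ok n \<sigma>" "h 0 = 1" "\<forall>i<n. \<forall>j<n. x i = x j"
  shows "real n + 2 * U_energy h n \<sigma> x = (real_of_int (\<Sum>j<n. \<sigma> j))\<^sup>2"
proof -
  have "real n + 2 * U_energy h n \<sigma> x = (\<Sum>i<n. \<Sum>j<n. real_of_int (\<sigma> i) * real_of_int (\<sigma> j))"
    unfolding U_energy_double_sum[of n \<sigma> h x, OF assms(1,2)]
  proof (intro sum.cong refl)
    fix i j assume "i \<in> {..<n}" "j \<in> {..<n}"
    then have "x i = x j"
      using assms(3) by blast
    then show "real_of_int (\<sigma> i * \<sigma> j) * h (dist (x i) (x j))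
               = real_of_int (\<sigma> i) * real_of_int (\<sigma> j)"
      using assms(2) by simp
  qed
  then show ?thesis
    by (simp add: power2_eq_square sum_product)
qed

lemma U_energy_coincident_neutral:
  assumes "spins_ok n \<sigma>" "h 0 = 1" "\<forall>i<n. \<forall>j<n. x i = x j" "(\<Sum>j<n. \<sigma> j) = 0" "n > 0"
  shows "U_energy h n \<sigma> x / real n = -1/2"
  using U_energy_coincident[of n \<sigma> h x, OF assms(1-3)] assms(4,5) by (simp add: field_simps)

lemma U_energy_coincident_unit_charge:
  assumes "spins_ok n \<sigma>" "h 0 = 1" "\<forall>i<n. \<forall>j<n. x i = x j" "\<bar>\<Sum>j<n. \<sigma> j\<bar> = 1" "n \<ge> 2"
  shows "U_energy h n \<sigma> x / (real n - 1) = -1/2"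
proof -
  have "(real_of_int (\<Sum>j<n. \<sigma> j))\<^sup>2 = 1"
    using assms(4) by (metis of_int_1 of_int_abs power2_abs power_one)
  then show ?thesis
    using U_energy_coincident[of n \<sigma> h x, OF assms(1-3)] assms(5) by (simp add: field_simps)
qed

lemma U_energy_euclid_hat_lower_bound:
  assumes "spins_ok n \<sigma>"
  shows "\<bar>real_of_int (\<Sum>j<n. \<sigma> j)\<bar> \<le> real n + 2 * U_energy euclid_hat n \<sigma> x"
  using abs_sum_le_euclid_hat_form[of \<sigma> n x] U_energy_double_sum[of n \<sigma> euclid_hat x, OF assms]
  by simp

lemma min_spec_energy_euclid_hat: "min_spec_energy euclid_hat = -1/2"
  unfolding min_spec_energy_def
proof (rule cInf_eq_minimum)
  define \<sigma> :: "nat \<Rightarrow> int" where "\<sigma> j = (if j = 0 then 1 else -1)" for j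
  have "spins_ok 2 \<sigma>" "(\<Sum>j<2. \<sigma> j) = 0"
    by (simp_all add: spins_ok_def \<sigma>_def numeral_2_eq_2)
  then have "-1/2 = U_energy euclid_hat 2 \<sigma> (\<lambda>_. 0) / real 2"
    by (intro U_energy_coincident_neutral[symmetric]) auto
  with \<open>spins_ok 2 \<sigma>\<close> show "-1/2 \<in> {U_energy euclid_hat n \<sigma> x / real n | n \<sigma> x. n \<ge> 2 \<and> spins_ok n \<sigma>}"
    by blast
next
  fix y assume "y \<in> {U_energy euclid_hat n \<sigma> x / real n | n \<sigma> x. n \<ge> 2 \<and> spins_ok n \<sigma>}"
  then obtain n \<sigma> x where y: "y = U_energy euclid_hat n \<sigma> x / real n" "n \<ge> 2" "spins_ok n \<sigma>"
    by auto
  then have "-1/2 * real n \<le> U_energy euclid_hat n \<sigma> x"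
    using U_energy_euclid_hat_lower_bound[OF y(3), of x] by linarith
  moreover have "0 < real n"
    using y(2) by simp
  ultimately show "-1/2 \<le> y"
    unfolding y(1) by (rule iffD2[OF pos_le_divide_eq, rotated])
qed

lemma mod_min_spec_energy_euclid_hat: "mod_min_spec_energy euclid_hat = -1/2"
  unfolding mod_min_spec_energy_def
proof (rule cInf_eq_minimum)
  define \<sigma> :: "nat \<Rightarrow> int" where "\<sigma> j = (if j = 0 then -1 else 1)" for j
  have "spins_ok 3 \<sigma>" "(\<Sum>j<3. \<sigma> j) = 1"
    by (simp_all add: spins_ok_def \<sigma>_def eval_nat_numeral)
  then have "-1/2 = U_energy euclid_hat 3 \<sigma> (\<lambda>_. 0) / (real 3 - 1)"
    by (intro U_energy_coincident_unit_charge[symmetric]) auto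
  with \<open>spins_ok 3 \<sigma>\<close> \<open>(\<Sum>j<3. \<sigma> j) = 1\<close>
  show "-1/2 \<in> {U_energy euclid_hat n \<sigma> x / (real n - 1) | n \<sigma> x.
                  n \<ge> 2 \<and> spins_ok n \<sigma> \<and> (\<Sum>j<n. \<sigma> j) \<noteq> 0}"
    by fastforce
next
  fix y assume "y \<in> {U_energy euclid_hat n \<sigma> x / (real n - 1) | n \<sigma> x.
                     n \<ge> 2 \<and> spins_ok n \<sigma> \<and> (\<Sum>j<n. \<sigma> j) \<noteq> 0}"
  then obtain n \<sigma> x where y: "y = U_energy euclid_hat n \<sigma> x / (real n - 1)" "n \<ge> 2"
    "spins_ok n \<sigma>" "(\<Sum>j<n. \<sigma> j) \<noteq> 0"
    by auto
  have "1 \<le> \<bar>real_of_int (\<Sum>j<n. \<sigma> j)\<bar>"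
    using y(4) by linarith
  then have "1 \<le> real n + 2 * U_energy euclid_hat n \<sigma> x"
    using U_energy_euclid_hat_lower_bound[OF y(3), of x] by linarith
  then have "-1/2 * (real n - 1) \<le> U_energy euclid_hat n \<sigma> x"
    by (simp add: field_simps)
  moreover have "0 < real n - 1"
    using y(2) by simp
  ultimately show "-1/2 \<le> y"
    unfolding y(1) by (rule iffD2[OF pos_le_divide_eq, rotated])
qed

theorem corollary2p7:
  shows "min_spec_energy euclid_hat = -1/2 \<and> mod_min_spec_energy euclid_hat = -1/2
    \<and> (\<forall>n \<sigma> x. n \<ge> 2 \<and> even n \<and> spins_ok n \<sigma> \<and> (\<Sum>j<n. \<sigma> j) = 0
          \<and> (\<forall>i<n. \<forall>j<n. x i = x j)
          \<longrightarrow> U_energy euclid_hat n \<sigma> x / real n = -1/2)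
    \<and> (\<forall>n \<sigma> x. n \<ge> 2 \<and> odd n \<and> spins_ok n \<sigma> \<and> \<bar>\<Sum>j<n. \<sigma> j\<bar> = 1
          \<and> (\<forall>i<n. \<forall>j<n. x i = x j)
          \<longrightarrow> U_energy euclid_hat n \<sigma> x / (real n - 1) = -1/2)"
proof (intro conjI allI impI; (elim conjE)?)
  fix n \<sigma> and x :: "nat \<Rightarrow> real^2"
  assume "n \<ge> 2" "even n" "spins_ok n \<sigma>" "(\<Sum>j<n. \<sigma> j) = 0" "\<forall>i<n. \<forall>j<n. x i = x j"
  from U_energy_coincident_neutral[of n \<sigma> euclid_hat x, OF this(3) euclid_hat_0 this(5,4)] this(1)
  show "U_energy euclid_hat n \<sigma> x / real n = -1/2"
    by simp
next
  fix n \<sigma> and x :: "nat \<Rightarrow> real^2"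
  assume "n \<ge> 2" "odd n" "spins_ok n \<sigma>" "\<bar>\<Sum>j<n. \<sigma> j\<bar> = 1" "\<forall>i<n. \<forall>j<n. x i = x j"
  from U_energy_coincident_unit_charge[of n \<sigma> euclid_hat x, OF this(3) euclid_hat_0 this(5,4,1)]
  show "U_energy euclid_hat n \<sigma> x / (real n - 1) = -1/2" .
qed (fact min_spec_energy_euclid_hat mod_min_spec_energy_euclid_hat)+

end
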